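(* Let $G$ be a graph of order $n$ with maximum degree $\Delta\ge 1$. Then $$\gamma_{rdR}(G)\ge \frac{2n+(\Delta-2)\gamma_r(G)}{\Delta}.$$ Moreover, the bound is sharp: for every integer $\Delta\ge 4$ there is a graph with maximum degree $\Delta$ attaining equality.
   Context: All graphs are finite and simple. An RDRD function of $G$ is a function $f:V(G)\to\{0,1,2,3\}$ such that every vertex with value $0$ has at least two neighbors with value $2$ or at least one neighbor with value $3$, every vertex with value $1$ has a neighbor with value $2$ or $3$, and the subgraph induced by the vertices with value $0$ has no isolated vertices; $\gamma_{rdR}(G)$ is the minimum of $\sum_v f(v)$ over RDRD functions. A restrained dominating set of $G$ is a set $S\subseteq V(G)$ such that every vertex of $V(G)\setminus S$ has a neighbor in $S$ and a neighbor in $V(G)\setminus S$; $\gamma_r(G)$ is the minimum cardinality of such a set. *)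

theory Defs
  imports Complex_Main
begin

definition sgraph :: "'a set \<Rightarrow> ('a \<Rightarrow> 'a \<Rightarrow> bool) \<Rightarrow> bool" where
  "sgraph V E \<longleftrightarrow> finite V \<and> (\<forall>u v. E u v \<longrightarrow> u \<in> V \<and> v \<in> V)
     \<and> (\<forall>u v. E u v \<longrightarrow> E v u) \<and> (\<forall>v. \<not> E v v)"

definition degree :: "'a set \<Rightarrow> ('a \<Rightarrow> 'a \<Rightarrow> bool) \<Rightarrow> 'a \<Rightarrow> nat" where
  "degree V E v = card {u \<in> V. E v u}"

definition maxdeg :: "'a set \<Rightarrow> ('a \<Rightarrow> 'a \<Rightarrow> bool) \<Rightarrow> nat" where
  "maxdeg V E = Max (insert 0 (degree V E ` V))"

definition is_RDRD :: "'a set \<Rightarrow> ('a \<Rightarrow> 'a \<Rightarrow> bool) \<Rightarrow> ('a \<Rightarrow> nat) \<Rightarrow> bool" where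
  "is_RDRD V E f \<longleftrightarrow> (\<forall>v\<in>V. f v \<le> 3
     \<and> (f v = 0 \<longrightarrow> (2 \<le> card {u \<in> V. E v u \<and> f u = 2} \<or> (\<exists>u\<in>V. E v u \<and> f u = 3)))
     \<and> (f v = 1 \<longrightarrow> (\<exists>u\<in>V. E v u \<and> (f u = 2 \<or> f u = 3)))
     \<and> (f v = 0 \<longrightarrow> (\<exists>u\<in>V. E v u \<and> f u = 0)))"

definition gamma_rdR :: "'a set \<Rightarrow> ('a \<Rightarrow> 'a \<Rightarrow> bool) \<Rightarrow> nat" where
  "gamma_rdR V E = Min {(\<Sum>v\<in>V. f v) | f. is_RDRD V E f}"

definition restrained_dom_set :: "'a set \<Rightarrow> ('a \<Rightarrow> 'a \<Rightarrow> bool) \<Rightarrow> 'a set \<Rightarrow> bool" where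
  "restrained_dom_set V E S \<longleftrightarrow> S \<subseteq> V \<and>
     (\<forall>v \<in> V - S. (\<exists>u\<in>S. E v u) \<and> (\<exists>u\<in>V - S. E v u))"

definition gamma_r :: "'a set \<Rightarrow> ('a \<Rightarrow> 'a \<Rightarrow> bool) \<Rightarrow> nat" where
  "gamma_r V E = Min {card S | S. restrained_dom_set V E S}"

end

theory Submission
  imports Defs
begin

text \<open>
  Take an optimal RDRD function \<open>f\<close> with level sets \<open>V\<^sub>0, \<dots>, V\<^sub>3\<close>. The vertices of positive
  weight form a restrained dominating set, so \<open>\<gamma>\<^sub>r \<le> n - |V\<^sub>0|\<close>. Every vertex of \<open>V\<^sub>0\<close> sees
  two vertices of \<open>V\<^sub>2\<close> or one of \<open>V\<^sub>3\<close>, and every vertex sees at most \<open>\<Delta>\<close> vertices of \<open>V\<^sub>0\<close>;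
  double counting gives \<open>2|V\<^sub>0| \<le> \<Delta> (|V\<^sub>2| + 2|V\<^sub>3|)\<close>, which rearranges to
  \<open>2|V\<^sub>0| + \<Delta> (n - |V\<^sub>0|) \<le> \<Delta> \<Sum>f\<close>. For \<open>\<Delta> \<ge> 2\<close> this yields the bound; for \<open>\<Delta> = 1\<close> no
  vertex can have neighbours on both sides of a partition, so \<open>\<gamma>\<^sub>r = n\<close> and \<open>V\<^sub>0 = {}\<close>.
  Equality holds for the wheel \<open>W\<^sub>\<Delta>\<close>: \<open>\<gamma>\<^sub>r = 1\<close>, and the hub alone carrying weight 3
  gives \<open>\<gamma>\<^sub>r\<^sub>d\<^sub>R \<le> 3\<close>, which is the value of the bound.
\<close>

lemma card_filter_eq_sum:
  "finite A \<Longrightarrow> card {x \<in> A. P x} = (\<Sum>x\<in>A. if P x then 1 else 0)"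
  by (simp add: sum.If_cases Int_def conj_commute)

lemma card_filter_add_card_filter_not:
  assumes "finite A"
  shows "card {x \<in> A. P x} + card {x \<in> A. \<not> P x} = card A"
proof -
  have "card ({x \<in> A. P x} \<union> {x \<in> A. \<not> P x}) = card {x \<in> A. P x} + card {x \<in> A. \<not> P x}"
    using assms by (intro card_Un_disjoint) auto
  moreover have "{x \<in> A. P x} \<union> {x \<in> A. \<not> P x} = A" by blast
  ultimately show ?thesis by simp
qed

lemma sum_card_filter_swap:
  "finite A \<Longrightarrow> finite B \<Longrightarrow>
    (\<Sum>a\<in>A. card {b \<in> B. R a b}) = (\<Sum>b\<in>B. card {a \<in> A. R a b})"
  by (simp add: card_filter_eq_sum sum.swap[of _ A B])

lemma sgraph_finite: "sgraph V E \<Longrightarrow> finite V"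
  and sgraph_edge_in: "sgraph V E \<Longrightarrow> E u v \<Longrightarrow> u \<in> V \<and> v \<in> V"
  and sgraph_sym: "sgraph V E \<Longrightarrow> E u v \<Longrightarrow> E v u"
  unfolding sgraph_def by blast+

lemma card_neighbours_le_maxdeg:
  "sgraph V E \<Longrightarrow> v \<in> V \<Longrightarrow> card {u \<in> V. E v u} \<le> maxdeg V E"
  unfolding maxdeg_def degree_def by (rule Max_ge) (auto simp: sgraph_finite)

lemma maxdeg_ge_2_if_two_neighbours:
  assumes "sgraph V E" "E v a" "E v b" "a \<noteq> b"
  shows "2 \<le> maxdeg V E"
proof -
  have "v \<in> V" "a \<in> V" "b \<in> V" using sgraph_edge_in[OF assms(1)] assms(2,3) by blast+
  then have "card {a, b} \<le> card {u \<in> V. E v u}"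
    using assms(2,3) sgraph_finite[OF assms(1)] by (intro card_mono) auto
  with card_neighbours_le_maxdeg[OF assms(1) \<open>v \<in> V\<close>] \<open>a \<noteq> b\<close> show ?thesis by simp
qed

lemma restrained_dom_set_finite:
  "sgraph V E \<Longrightarrow> restrained_dom_set V E S \<Longrightarrow> finite S"
  unfolding restrained_dom_set_def using sgraph_finite finite_subset by blast

lemma gamma_r_attained:
  assumes "sgraph V E"
  shows "\<exists>S. restrained_dom_set V E S \<and> gamma_r V E = card S"
    and "restrained_dom_set V E S \<Longrightarrow> gamma_r V E \<le> card S"
proof -
  let ?C = "{card S | S. restrained_dom_set V E S}"
  have "?C \<subseteq> {..card V}"
    using assms by (auto simp: restrained_dom_set_def sgraph_finite intro: card_mono)
  then have fin: "finite ?C" by (rule finite_subset) simp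
  have "restrained_dom_set V E V" by (simp add: restrained_dom_set_def)
  then have "?C \<noteq> {}" by blast
  from Min_in[OF fin this] show "\<exists>S. restrained_dom_set V E S \<and> gamma_r V E = card S"
    unfolding gamma_r_def by auto
  show "restrained_dom_set V E S \<Longrightarrow> gamma_r V E \<le> card S"
    unfolding gamma_r_def by (rule Min_le[OF fin]) blast
qed

lemma gamma_r_pos:
  assumes "sgraph V E" "V \<noteq> {}"
  shows "1 \<le> gamma_r V E"
proof -
  obtain S where S: "restrained_dom_set V E S" "gamma_r V E = card S"
    using gamma_r_attained(1)[OF assms(1)] by blast
  have "S \<noteq> {}" using S(1) assms(2) by (auto simp: restrained_dom_set_def)
  with restrained_dom_set_finite[OF assms(1) S(1)] S(2) show ?thesis
    by (simp add: Suc_le_eq card_gt_0_iff)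
qed

text \<open>A vertex outside a restrained dominating set has neighbours on both sides of it.\<close>
lemma restrained_dom_set_eq_if_maxdeg_lt_2:
  assumes "sgraph V E" "maxdeg V E < 2" "restrained_dom_set V E S"
  shows "S = V"
proof (rule ccontr)
  assume "S \<noteq> V"
  with assms(3) obtain v where "v \<in> V - S" by (auto simp: restrained_dom_set_def)
  with assms(3) obtain a b where "a \<in> S" "E v a" "b \<in> V - S" "E v b"
    unfolding restrained_dom_set_def by blast
  then have "2 \<le> maxdeg V E" using maxdeg_ge_2_if_two_neighbours[OF assms(1)] by blast
  with assms(2) show False by simp
qed

lemma gamma_r_eq_card_if_maxdeg_lt_2:
  "sgraph V E \<Longrightarrow> maxdeg V E < 2 \<Longrightarrow> gamma_r V E = card V"
  using gamma_r_attained(1) restrained_dom_set_eq_if_maxdeg_lt_2 by metis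

lemma is_RDRD_D:
  assumes "is_RDRD V E f" "v \<in> V"
  shows "f v \<le> 3"
    and "f v = 0 \<Longrightarrow> 2 \<le> card {u \<in> V. E v u \<and> f u = 2} \<or> (\<exists>u\<in>V. E v u \<and> f u = 3)"
    and "f v = 0 \<Longrightarrow> \<exists>u\<in>V. E v u \<and> f u = 0"
  using assms by (auto simp: is_RDRD_def)

lemma gamma_rdR_attained:
  assumes "sgraph V E"
  shows "\<exists>f. is_RDRD V E f \<and> gamma_rdR V E = (\<Sum>v\<in>V. f v)"
    and "is_RDRD V E g \<Longrightarrow> gamma_rdR V E \<le> (\<Sum>v\<in>V. g v)"
proof -
  let ?W = "{(\<Sum>v\<in>V. f v) | f. is_RDRD V E f}"
  have "?W \<subseteq> {..3 * card V}"
  proof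
    fix w assume "w \<in> ?W"
    then obtain f where f: "is_RDRD V E f" "w = (\<Sum>v\<in>V. f v)" by blast
    have "(\<Sum>v\<in>V. f v) \<le> (\<Sum>v\<in>V. 3)" using is_RDRD_D(1)[OF f(1)] by (intro sum_mono)
    with f(2) show "w \<in> {..3 * card V}" by simp
  qed
  then have fin: "finite ?W" by (rule finite_subset) simp
  have "is_RDRD V E (\<lambda>_. 3)" by (simp add: is_RDRD_def)
  then have "?W \<noteq> {}" by blast
  from Min_in[OF fin this] show "\<exists>f. is_RDRD V E f \<and> gamma_rdR V E = (\<Sum>v\<in>V. f v)"
    unfolding gamma_rdR_def by auto
  show "is_RDRD V E g \<Longrightarrow> gamma_rdR V E \<le> (\<Sum>v\<in>V. g v)"
    unfolding gamma_rdR_def by (rule Min_le[OF fin]) blast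
qed

lemma restrained_dom_set_RDRD_support:
  assumes "is_RDRD V E f"
  shows "restrained_dom_set V E {v \<in> V. f v \<noteq> 0}"
  unfolding restrained_dom_set_def
proof (intro conjI ballI)
  fix v assume "v \<in> V - {v \<in> V. f v \<noteq> 0}"
  then have v: "v \<in> V" "f v = 0" by auto
  show "\<exists>u\<in>V - {v \<in> V. f v \<noteq> 0}. E v u" using is_RDRD_D(3)[OF assms v] by auto
  from is_RDRD_D(2)[OF assms v] show "\<exists>u\<in>{v \<in> V. f v \<noteq> 0}. E v u"
  proof
    assume "2 \<le> card {u \<in> V. E v u \<and> f u = 2}"
    then have "{u \<in> V. E v u \<and> f u = 2} \<noteq> {}" by (metis card.empty not_numeral_le_zero)
    then show ?thesis by auto
  qed auto
qed auto

lemma sum_eq_card_level_sets: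
  assumes "finite V" "\<And>v. v \<in> V \<Longrightarrow> f v \<le> (3::nat)"
  shows "(\<Sum>v\<in>V. f v) =
    card {v \<in> V. f v \<noteq> 0} + card {v \<in> V. f v = 2} + 2 * card {v \<in> V. f v = 3}"
proof -
  have "f v = (if f v \<noteq> 0 then 1 else 0) + (if f v = 2 then 1 else 0) + 2 * (if f v = 3 then 1 else 0)"
    if "v \<in> V" for v
    using assms(2)[OF that] by auto
  then have "(\<Sum>v\<in>V. f v) = (\<Sum>v\<in>V. (if f v \<noteq> 0 then 1 else 0) + (if f v = 2 then 1 else 0)
      + 2 * (if f v = 3 then 1 else 0))"
    by (rule sum.cong[OF refl])
  then show ?thesis
    by (simp only: card_filter_eq_sum[OF assms(1)] sum.distrib sum_distrib_left)
qed

text \<open>Double counting of the edges between \<open>V\<^sub>0\<close> and \<open>V\<^sub>2 \<union> V\<^sub>3\<close>.\<close>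
lemma card_RDRD_zeros_le:
  assumes G: "sgraph V E" and f: "is_RDRD V E f"
  defines "V0 \<equiv> {v \<in> V. f v = 0}" and "V2 \<equiv> {v \<in> V. f v = 2}" and "V3 \<equiv> {v \<in> V. f v = 3}"
  shows "2 * card V0 \<le> maxdeg V E * (card V2 + 2 * card V3)"
proof -
  have fin: "finite V0" "finite V2" "finite V3"
    using sgraph_finite[OF G] by (simp_all add: V0_def V2_def V3_def)
  have per_zero: "2 \<le> card {u \<in> V2. E v u} + 2 * card {u \<in> V3. E v u}" if "v \<in> V0" for v
  proof -
    from that have v: "v \<in> V" "f v = 0" by (auto simp: V0_def)
    from is_RDRD_D(2)[OF f v] show ?thesis
    proof
      assume "2 \<le> card {u \<in> V. E v u \<and> f u = 2}"
      moreover have "{u \<in> V. E v u \<and> f u = 2} = {u \<in> V2. E v u}" by (auto simp: V2_def)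
      ultimately show ?thesis by simp
    next
      assume "\<exists>u\<in>V. E v u \<and> f u = 3"
      then have "{u \<in> V3. E v u} \<noteq> {}" by (auto simp: V3_def)
      moreover have "finite {u \<in> V3. E v u}" using fin(3) by simp
      ultimately have "card {u \<in> V3. E v u} \<noteq> 0" by simp
      then show ?thesis by simp
    qed
  qed
  have zeros_seen: "card {v \<in> V0. E v u} \<le> maxdeg V E" if "u \<in> V" for u
  proof -
    have "card {v \<in> V0. E v u} \<le> card {v \<in> V. E u v}"
      using G by (intro card_mono) (auto simp: V0_def sgraph_finite dest: sgraph_sym)
    with card_neighbours_le_maxdeg[OF G that] show ?thesis by simp
  qed
  have "2 * card V0 = (\<Sum>v\<in>V0. 2)" by simp
  also have "\<dots> \<le> (\<Sum>v\<in>V0. card {u \<in> V2. E v u} + 2 * card {u \<in> V3. E v u})"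
    using per_zero by (rule sum_mono)
  also have "\<dots> = (\<Sum>u\<in>V2. card {v \<in> V0. E v u}) + 2 * (\<Sum>u\<in>V3. card {v \<in> V0. E v u})"
    using sum_card_filter_swap[OF fin(1,2), of E] sum_card_filter_swap[OF fin(1,3), of E]
    by (simp add: sum.distrib flip: sum_distrib_left)
  also have "\<dots> \<le> (\<Sum>u\<in>V2. maxdeg V E) + 2 * (\<Sum>u\<in>V3. maxdeg V E)"
    using zeros_seen by (intro add_mono mult_le_mono2 sum_mono) (auto simp: V2_def V3_def)
  also have "\<dots> = maxdeg V E * (card V2 + 2 * card V3)" by (simp add: algebra_simps)
  finally show ?thesis .
qed

lemma RDRD_weight_lower_bound:
  assumes G: "sgraph V E" and f: "is_RDRD V E f"
  shows "2 * card {v \<in> V. f v = 0} + maxdeg V E * card {v \<in> V. f v \<noteq> 0}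
    \<le> maxdeg V E * (\<Sum>v\<in>V. f v)"
  using card_RDRD_zeros_le[OF G f] sum_eq_card_level_sets[OF sgraph_finite[OF G] is_RDRD_D(1)[OF f]]
  by (simp add: algebra_simps)

theorem gamma_rdR_lower_bound:
  assumes G: "sgraph V E" and "maxdeg V E \<ge> 1"
  shows "real (gamma_rdR V E) \<ge>
    (2 * real (card V) + (real (maxdeg V E) - 2) * real (gamma_r V E)) / real (maxdeg V E)"
proof -
  define \<Delta> where "\<Delta> = maxdeg V E"
  obtain f where f: "is_RDRD V E f" and w: "gamma_rdR V E = (\<Sum>v\<in>V. f v)"
    using gamma_rdR_attained(1)[OF G] by blast
  define n0 where "n0 = card {v \<in> V. f v = 0}"
  define n' where "n' = card {v \<in> V. f v \<noteq> 0}"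
  have n: "card V = n0 + n'"
    using card_filter_add_card_filter_not[OF sgraph_finite[OF G], of "\<lambda>v. f v = 0"]
    by (simp add: n0_def n'_def)
  have weight: "2 * n0 + \<Delta> * n' \<le> \<Delta> * gamma_rdR V E"
    using RDRD_weight_lower_bound[OF G f] by (simp add: \<Delta>_def n0_def n'_def w)
  have gr: "(real \<Delta> - 2) * gamma_r V E \<le> (real \<Delta> - 2) * n'"
  proof (cases "\<Delta> \<ge> 2")
    case True
    have "gamma_r V E \<le> n'"
      using gamma_r_attained(2)[OF G restrained_dom_set_RDRD_support[OF f]] by (simp add: n'_def)
    with True show ?thesis by (intro mult_left_mono) auto
  next
    case False
    then have "gamma_r V E = card V" "{v \<in> V. f v \<noteq> 0} = V"
      using gamma_r_eq_card_if_maxdeg_lt_2[OF G]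
        restrained_dom_set_eq_if_maxdeg_lt_2[OF G _ restrained_dom_set_RDRD_support[OF f]]
      by (simp_all add: \<Delta>_def)
    then show ?thesis by (simp add: n'_def)
  qed
  have "2 * real (card V) + (real \<Delta> - 2) * gamma_r V E \<le> 2 * real n0 + real \<Delta> * n'"
    using gr n by (simp add: algebra_simps)
  also have "\<dots> \<le> real \<Delta> * gamma_rdR V E"
    using weight by (metis of_nat_add of_nat_le_iff of_nat_mult of_nat_numeral)
  finally show ?thesis
    using assms(2) by (simp add: \<Delta>_def pos_divide_le_eq mult.commute)
qed

lemma universal_vertex_bounds:
  assumes G: "sgraph V E" and c: "c \<in> V" "\<And>v. v \<in> V - {c} \<Longrightarrow> E v c"
    and rest: "\<And>v. v \<in> V - {c} \<Longrightarrow> \<exists>u\<in>V - {c}. E v u"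
  shows "gamma_r V E \<le> 1" and "gamma_rdR V E \<le> 3"
proof -
  have "restrained_dom_set V E {c}"
    using c rest by (auto simp: restrained_dom_set_def)
  from gamma_r_attained(2)[OF G this] show "gamma_r V E \<le> 1" by simp
  define f where "f v = (if v = c then 3 else 0 :: nat)" for v
  have "is_RDRD V E f"
    using c rest by (auto simp: is_RDRD_def f_def)
  from gamma_rdR_attained(2)[OF G this] show "gamma_rdR V E \<le> 3"
    using c sgraph_finite[OF G] by (simp add: f_def sum.delta)
qed

definition wheel_edge :: "nat \<Rightarrow> nat \<Rightarrow> nat \<Rightarrow> bool" where
  "wheel_edge D u v \<longleftrightarrow> (u = 0 \<and> v \<in> {1..D}) \<or> (v = 0 \<and> u \<in> {1..D}) \<or>
     (u \<in> {1..D} \<and> v \<in> {1..D} \<and> (v = u + 1 \<or> u = v + 1 \<or> (u = 1 \<and> v = D) \<or> (u = D \<and> v = 1)))"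

lemma sgraph_wheel: "D \<ge> 3 \<Longrightarrow> sgraph {0..D} (wheel_edge D)"
  by (auto simp: sgraph_def wheel_edge_def)

lemma wheel_rim_neighbour:
  "i \<in> {1..D} \<Longrightarrow> wheel_edge D i (if i = D then 1 else i + 1)"
  by (auto simp: wheel_edge_def)

lemma maxdeg_wheel:
  assumes "D \<ge> 3"
  shows "maxdeg {0..D} (wheel_edge D) = D"
  unfolding maxdeg_def
proof (rule Max_eqI)
  have "{u \<in> {0..D}. wheel_edge D 0 u} = {1..D}" by (auto simp: wheel_edge_def)
  then have hub: "degree {0..D} (wheel_edge D) 0 = D" by (simp add: degree_def)
  then show "D \<in> insert 0 (degree {0..D} (wheel_edge D) ` {0..D})" by force
  have rim: "degree {0..D} (wheel_edge D) i \<le> D" if "i \<in> {1..D}" for i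
  proof -
    have "{u \<in> {0..D}. wheel_edge D i u} \<subseteq> {0, if i = D then 1 else i + 1, if i = 1 then D else i - 1}"
      using that by (auto simp: wheel_edge_def)
    then have "degree {0..D} (wheel_edge D) i \<le> card {0, if i = D then 1 else i + 1, if i = 1 then D else i - 1}"
      unfolding degree_def by (intro card_mono) auto
    also have "\<dots> \<le> 3" by (auto simp: card_insert_if)
    finally show ?thesis using assms by simp
  qed
  have "degree {0..D} (wheel_edge D) i \<le> D" if "i \<in> {0..D}" for i
    using hub rim that by (cases "i = 0") auto
  then show "y \<le> D" if "y \<in> insert 0 (degree {0..D} (wheel_edge D) ` {0..D})" for y
    using that by blast
qed simp

lemma wheel_bounds:
  assumes "D \<ge> 3"
  shows "gamma_r {0..D} (wheel_edge D) \<le> 1" and "gamma_rdR {0..D} (wheel_edge D) \<le> 3"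
proof -
  have rim: "\<exists>u\<in>{0..D} - {0}. wheel_edge D v u" if "v \<in> {0..D} - {0}" for v
    using that wheel_rim_neighbour[of v D] assms by (intro bexI[of _ "if v = D then 1 else v + 1"]) auto
  have hub: "wheel_edge D v 0" if "v \<in> {0..D} - {0}" for v
    using that by (auto simp: wheel_edge_def)
  show "gamma_r {0..D} (wheel_edge D) \<le> 1" "gamma_rdR {0..D} (wheel_edge D) \<le> 3"
    using universal_vertex_bounds[OF sgraph_wheel[OF assms], of 0] rim hub by auto
qed

theorem theorem2p4:
  shows "(\<forall>(V :: 'a set) E. sgraph V E \<and> maxdeg V E \<ge> 1 \<longrightarrow>
            real (gamma_rdR V E) \<ge>
              (2 * real (card V) + (real (maxdeg V E) - 2) * real (gamma_r V E)) / real (maxdeg V E))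
      \<and> (\<forall>D :: nat. D \<ge> 4 \<longrightarrow> (\<exists>(V :: nat set) E. sgraph V E \<and> maxdeg V E = D \<and>
            real (gamma_rdR V E) =
              (2 * real (card V) + (real D - 2) * real (gamma_r V E)) / real D))"
proof (intro conjI allI impI)
  fix V :: "'a set" and E
  assume "sgraph V E \<and> maxdeg V E \<ge> 1"
  then show "real (gamma_rdR V E) \<ge>
      (2 * real (card V) + (real (maxdeg V E) - 2) * real (gamma_r V E)) / real (maxdeg V E)"
    using gamma_rdR_lower_bound by blast
next
  fix D :: nat assume D: "D \<ge> 4"
  let ?V = "{0..D}" and ?E = "wheel_edge D"
  have \<Delta>: "maxdeg ?V ?E = D" using maxdeg_wheel D by simp
  have G: "sgraph ?V ?E" using sgraph_wheel D by simp
  have gr: "gamma_r ?V ?E = 1"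
    using wheel_bounds(1) gamma_r_pos[OF G] D by (simp add: le_antisym)
  have bound: "(2 * real (card ?V) + (real D - 2) * real (gamma_r ?V ?E)) / real D = 3"
    using D by (simp add: gr field_simps)
  have "real (gamma_rdR ?V ?E) = 3"
    using gamma_rdR_lower_bound[OF G] wheel_bounds(2)[of D] \<Delta> bound D
    by simp
  with G \<Delta> bound show "\<exists>(V :: nat set) E. sgraph V E \<and> maxdeg V E = D \<and>
      real (gamma_rdR V E) = (2 * real (card V) + (real D - 2) * real (gamma_r V E)) / real D"
    by metis
qed

end
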